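(* Let $D$ be a cone, let $\varphi\colon D\to\overline{\mathbb{R}}_+$ be a sublinear functional, and let $\psi_1,\dots,\psi_n\colon D\to\overline{\mathbb{R}}_+$ ($n\ge1$) be linear functionals such that $\min(\psi_1(x),\dots,\psi_n(x))\le\varphi(x)$ for all $x\in D$. Then there are nonnegative real numbers $a_1,\dots,a_n$ with $\sum_{i=1}^n a_i=1$ such that for all $x\in D$ \[\min(\psi_1(x),\dots,\psi_n(x))\;\le\;\sum_{i=1}^n a_i\psi_i(x)\;\le\;\varphi(x).\]
   Context: $\overline{\mathbb{R}}_+=[0,+\infty)\cup\{+\infty\}$ with the usual order and arithmetic extended by $r+\infty=+\infty$, $r\cdot(+\infty)=+\infty$ for $r>0$, $0\cdot(+\infty)=0$. A cone is a commutative monoid $(C,+,0)$ with a scalar multiplication $[0,\infty)\times C\to C$ satisfying $r(x+y)=rx+ry$, $(r+s)x=rx+sx$, $(rs)x=r(sx)$, $1x=x$, $0x=0$ (no cancellation or additive inverses required). A functional is a map $\varphi\colon C\to\overline{\mathbb{R}}_+$. It is homogeneous if $\varphi(ra)=r\varphi(a)$ for all $a\in C$, $r\in[0,\infty)$; additive if $\varphi(a+b)=\varphi(a)+\varphi(b)$; subadditive if $\varphi(a+b)\le\varphi(a)+\varphi(b)$; linear = homogeneous and additive; sublinear = homogeneous and subadditive. *)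

theory Defs
  imports "HOL-Library.Extended_Nonnegative_Real"
begin

text \<open>A cone: carrier is the whole type 'a, with addition add, zero z and
  scalar multiplication sm by nonnegative reals (values of sm at negative
  scalars are irrelevant).\<close>
definition cone :: "('a \<Rightarrow> 'a \<Rightarrow> 'a) \<Rightarrow> 'a \<Rightarrow> (real \<Rightarrow> 'a \<Rightarrow> 'a) \<Rightarrow> bool" where
  "cone add z sm \<longleftrightarrow>
     (\<forall>x y w. add (add x y) w = add x (add y w)) \<and>
     (\<forall>x y. add x y = add y x) \<and>
     (\<forall>x. add x z = x) \<and>
     (\<forall>r x y. r \<ge> 0 \<longrightarrow> sm r (add x y) = add (sm r x) (sm r y)) \<and>
     (\<forall>r s x. r \<ge> 0 \<longrightarrow> s \<ge> 0 \<longrightarrow> sm (r + s) x = add (sm r x) (sm s x)) \<and>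
     (\<forall>r s x. r \<ge> 0 \<longrightarrow> s \<ge> 0 \<longrightarrow> sm (r * s) x = sm r (sm s x)) \<and>
     (\<forall>x. sm 1 x = x) \<and>
     (\<forall>x. sm 0 x = z)"

definition homogeneous :: "(real \<Rightarrow> 'a \<Rightarrow> 'a) \<Rightarrow> ('a \<Rightarrow> ennreal) \<Rightarrow> bool" where
  "homogeneous sm f \<longleftrightarrow> (\<forall>r x. r \<ge> 0 \<longrightarrow> f (sm r x) = ennreal r * f x)"

definition additive :: "('a \<Rightarrow> 'a \<Rightarrow> 'a) \<Rightarrow> ('a \<Rightarrow> ennreal) \<Rightarrow> bool" where
  "additive add f \<longleftrightarrow> (\<forall>x y. f (add x y) = f x + f y)"

definition subadditive :: "('a \<Rightarrow> 'a \<Rightarrow> 'a) \<Rightarrow> ('a \<Rightarrow> ennreal) \<Rightarrow> bool" where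
  "subadditive add f \<longleftrightarrow> (\<forall>x y. f (add x y) \<le> f x + f y)"

definition linear_functional where
  "linear_functional add sm f \<longleftrightarrow> homogeneous sm f \<and> additive add f"

definition sublinear_functional where
  "sublinear_functional add sm f \<longleftrightarrow> homogeneous sm f \<and> subadditive add f"

end

theory Submission
  imports Defs
begin

text \<open>For x with finite \<phi>(x), every real vector below (\<psi>_i(x) - \<phi>(x))_i (no constraint
  where \<psi>_i(x) is infinite) lies in a set S of real n-vectors which is convex, because \<phi> is
  sublinear and the \<psi>_i are linear, and each point of which has a nonpositive coordinate,
  because min_i \<psi>_i \<le> \<phi>. An elementary alternative theorem, proved by eliminating one
  coordinate at a time, yields a probability vector a with \<Sum>_i a_i y_i \<le> 0 on S; testing
  this on the vector above gives \<Sum>_i a_i \<psi>_i \<le> \<phi>, while min_i \<psi>_i \<le> \<Sum>_i a_i \<psi>_i is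
  trivial.\<close>

text \<open>Functions \<open>'i \<Rightarrow> real\<close> carry no \<open>real_vector\<close> instance, so convexity is spelled out
  pointwise.\<close>
definition fun_convex :: "('i \<Rightarrow> real) set \<Rightarrow> bool" where
  "fun_convex S \<longleftrightarrow>
     (\<forall>y\<in>S. \<forall>y'\<in>S. \<forall>t. 0 \<le> t \<and> t \<le> 1 \<longrightarrow> (\<lambda>i. t * y i + (1 - t) * y' i) \<in> S)"

lemma fun_convexD:
  "fun_convex S \<Longrightarrow> y \<in> S \<Longrightarrow> y' \<in> S \<Longrightarrow> 0 \<le> t \<Longrightarrow> t \<le> 1 \<Longrightarrow>
     (\<lambda>i. t * y i + (1 - t) * y' i) \<in> S"
  unfolding fun_convex_def by blast

lemma fun_convex_image_shift:
  assumes "fun_convex S"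
  shows "fun_convex ((\<lambda>y i. y i + c * y k) ` S)"
  unfolding fun_convex_def
proof (intro ballI allI impI)
  fix u v and t :: real
  assume "u \<in> (\<lambda>y i. y i + c * y k) ` S" "v \<in> (\<lambda>y i. y i + c * y k) ` S" and t: "0 \<le> t \<and> t \<le> 1"
  then obtain y y' where yS: "y \<in> S" "y' \<in> S" and uv: "u = (\<lambda>i. y i + c * y k)" "v = (\<lambda>i. y' i + c * y' k)"
    by (auto simp only: image_iff)
  have "(\<lambda>i. t * u i + (1 - t) * v i) =
      (\<lambda>y i. y i + c * y k) (\<lambda>i. t * y i + (1 - t) * y' i)"
    unfolding uv by (simp add: algebra_simps)
  moreover have "(\<lambda>i. t * y i + (1 - t) * y' i) \<in> S"
    using fun_convexD[OF assms yS] t by simp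
  ultimately show "(\<lambda>i. t * u i + (1 - t) * v i) \<in> (\<lambda>y i. y i + c * y k) ` S"
    by simp
qed

lemma Min_convex_comb_ge:
  fixes y y' :: "'i \<Rightarrow> real"
  assumes "finite I" "I \<noteq> {}" "0 \<le> t" "t \<le> 1"
  shows "t * Min (y ` I) + (1 - t) * Min (y' ` I) \<le> Min ((\<lambda>i. t * y i + (1 - t) * y' i) ` I)"
proof (rule Min.boundedI)
  fix r assume "r \<in> (\<lambda>i. t * y i + (1 - t) * y' i) ` I"
  then obtain i where "i \<in> I" "r = t * y i + (1 - t) * y' i" by blast
  moreover have "Min (y ` I) \<le> y i" "Min (y' ` I) \<le> y' i"
    using \<open>i \<in> I\<close> assms(1) by simp_all
  ultimately show "t * Min (y ` I) + (1 - t) * Min (y' ` I) \<le> r"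
    using assms(3,4) by (simp add: add_mono mult_left_mono)
qed (use assms in auto)

text \<open>Were the cross term positive, a point of the segment from y' to y slightly past the
  hyperplane where the k-th coordinate vanishes would have all coordinates positive.\<close>
lemma fun_convex_Min_cross_nonpos:
  assumes conv: "fun_convex S" and I: "finite I" "I \<noteq> {}"
    and nonpos: "\<forall>w\<in>S. \<exists>i\<in>insert k I. w i \<le> 0"
    and y: "y \<in> S" "y k > 0" and y': "y' \<in> S" "y' k \<le> 0"
  shows "Min (y' ` I) * y k - Min (y ` I) * y' k \<le> 0"
proof (rule ccontr)
  define m where "m = Min (y ` I)"
  define m' where "m' = Min (y' ` I)"
  define p where "p = y k"
  define q where "q = - y' k"
  define E where "E = m' * p + m * q"
  assume "\<not> ?thesis"
  then have "E > 0" unfolding E_def m_def m'_def p_def q_def by simp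
  have "p > 0" "q \<ge> 0" using y y' unfolding p_def q_def by auto
  define \<delta> where "\<delta> = E / (\<bar>m\<bar> + 1)"
  have "\<delta> > 0" using \<open>E > 0\<close> unfolding \<delta>_def by simp
  have "\<delta> * \<bar>m\<bar> < \<delta> * (\<bar>m\<bar> + 1)" using \<open>\<delta> > 0\<close> by simp
  also have "\<dots> = E" unfolding \<delta>_def by simp
  finally have "\<delta> * \<bar>m\<bar> < E" .
  moreover have "\<delta> * - \<bar>m\<bar> \<le> \<delta> * m" using \<open>\<delta> > 0\<close> by (intro mult_left_mono) auto
  ultimately have "E + \<delta> * m > 0" by simp
  define D where "D = p + q + \<delta>"
  have "D > 0" using \<open>p > 0\<close> \<open>q \<ge> 0\<close> \<open>\<delta> > 0\<close> unfolding D_def by simp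
  define t where "t = (q + \<delta>) / D"
  have tD: "t * D = q + \<delta>" and tD': "(1 - t) * D = p"
    using \<open>D > 0\<close> unfolding t_def D_def by (simp_all add: field_simps)
  have "0 \<le> t" "t \<le> 1" using \<open>q \<ge> 0\<close> \<open>\<delta> > 0\<close> \<open>p > 0\<close> \<open>D > 0\<close> unfolding t_def D_def by simp_all
  define w where "w = (\<lambda>i. t * y i + (1 - t) * y' i)"
  have "w \<in> S" unfolding w_def by (rule fun_convexD[OF conv y(1) y'(1) \<open>0 \<le> t\<close> \<open>t \<le> 1\<close>])
  have "w k * D = \<delta> * p"
  proof -
    have "w k * D = (t * D) * y k + ((1 - t) * D) * y' k" unfolding w_def by (simp add: algebra_simps)
    then show ?thesis unfolding tD tD' p_def q_def by (simp add: algebra_simps)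
  qed
  then have "w k > 0" using \<open>D > 0\<close> \<open>\<delta> > 0\<close> \<open>p > 0\<close> by (metis mult_pos_pos zero_less_mult_pos2)
  have "(t * m + (1 - t) * m') * D = E + \<delta> * m"
  proof -
    have "(t * m + (1 - t) * m') * D = (t * D) * m + ((1 - t) * D) * m'" by (simp add: algebra_simps)
    then show ?thesis unfolding tD tD' E_def by (simp add: algebra_simps)
  qed
  then have "t * m + (1 - t) * m' > 0" using \<open>D > 0\<close> \<open>E + \<delta> * m > 0\<close> by (metis zero_less_mult_pos2)
  then have "Min (w ` I) > 0"
    using Min_convex_comb_ge[OF I \<open>0 \<le> t\<close> \<open>t \<le> 1\<close>, of y y'] unfolding w_def m_def m'_def by linarith
  then have "\<forall>i\<in>insert k I. w i > 0" using \<open>w k > 0\<close> I by auto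
  then show False using nonpos \<open>w \<in> S\<close> by fastforce
qed

text \<open>c is the infimum of the slopes \<open>- Min (y ` I) / y k\<close> over y with \<open>y k > 0\<close>; the cross
  inequality places the slopes of the points with \<open>y k < 0\<close> below all of them.\<close>
lemma fun_convex_shift_weight:
  assumes conv: "fun_convex S" and I: "finite I" "I \<noteq> {}"
    and nonpos: "\<forall>w\<in>S. \<exists>i\<in>insert k I. w i \<le> 0"
    and y0: "y0 \<in> S" "y0 k > 0"
  obtains c where "c \<ge> 0" "\<forall>y\<in>S. Min (y ` I) + c * y k \<le> 0"
proof -
  have cross: "Min (y' ` I) * y k - Min (y ` I) * y' k \<le> 0"
    if "y \<in> S" "y k > 0" "y' \<in> S" "y' k \<le> 0" for y y'
    using fun_convex_Min_cross_nonpos[OF conv I nonpos that] .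
  have Min_nonpos: "Min (y ` I) \<le> 0" if "y \<in> S" "y k > 0" for y
  proof -
    obtain i where "i \<in> insert k I" "y i \<le> 0" using nonpos \<open>y \<in> S\<close> by blast
    with \<open>y k > 0\<close> have "i \<in> I" by auto
    then have "Min (y ` I) \<le> y i" using I by simp
    with \<open>y i \<le> 0\<close> show ?thesis by linarith
  qed
  define U where "U = {- Min (y ` I) / y k | y. y \<in> S \<and> y k > 0}"
  have "U \<noteq> {}" using y0 unfolding U_def by blast
  have U_nonneg: "0 \<le> u" if "u \<in> U" for u
    using that Min_nonpos unfolding U_def by (auto intro!: divide_nonpos_pos)
  then have "bdd_below U" unfolding bdd_below_def by blast
  define c where "c = Inf U"
  have "c \<ge> 0" unfolding c_def using \<open>U \<noteq> {}\<close> U_nonneg by (rule cInf_greatest)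
  moreover have "Min (y ` I) + c * y k \<le> 0" if "y \<in> S" for y
  proof (cases "y k" "0 :: real" rule: linorder_cases)
    case less
    have "Min (y ` I) / - y k \<le> u" if "u \<in> U" for u
      using that cross[of _ y] \<open>y \<in> S\<close> less unfolding U_def by (auto simp: field_simps)
    then have "Min (y ` I) / - y k \<le> c" unfolding c_def by (rule cInf_greatest[OF \<open>U \<noteq> {}\<close>])
    with less show ?thesis by (simp add: field_simps)
  next
    case equal
    then show ?thesis using cross[OF y0(1,2) \<open>y \<in> S\<close>] y0(2) by (simp add: mult_le_0_iff)
  next
    case greater
    have "c \<le> - Min (y ` I) / y k"
      unfolding c_def using \<open>bdd_below U\<close> \<open>y \<in> S\<close> greater by (intro cInf_lower) (auto simp: U_def)
    with greater show ?thesis by (simp add: field_simps)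
  qed
  ultimately show ?thesis using that by blast
qed

lemma fun_convex_nonpos_coord_imp_weights:
  assumes "finite I" "I \<noteq> {}" "fun_convex S" "\<forall>y\<in>S. \<exists>i\<in>I. y i \<le> 0"
  shows "\<exists>a. (\<forall>i\<in>I. 0 \<le> a i) \<and> sum a I = 1 \<and> (\<forall>y\<in>S. (\<Sum>i\<in>I. a i * y i) \<le> 0)"
  using assms
proof (induction I arbitrary: S rule: finite_ne_induct)
  case (singleton k)
  then show ?case by (intro exI[of _ "\<lambda>_. 1"]) auto
next
  case (insert k I)
  show ?case
  proof (cases "\<forall>y\<in>S. y k \<le> 0")
    case True
    have "(\<Sum>i\<in>I. (if i = k then 1 else 0) * y i) = 0" for y :: "'a \<Rightarrow> real"
      using insert.hyps by (intro sum.neutral) auto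
    with True show ?thesis
      using insert.hyps by (intro exI[of _ "\<lambda>i. if i = k then 1 else 0"]) auto
  next
    case False
    txt \<open>Adding c times coordinate k to the others removes coordinate k; weights for the
      shifted set extend to insert k I by giving k the weight c and renormalising.\<close>
    then obtain y0 where y0: "y0 \<in> S" "y0 k > 0" by (auto simp: not_le)
    obtain c where "c \<ge> 0" and c: "\<forall>y\<in>S. Min (y ` I) + c * y k \<le> 0"
      using fun_convex_shift_weight[OF insert.prems(1) insert.hyps(1,2) insert.prems(2) y0] .
    define shift where "shift y = (\<lambda>i. y i + c * y k)" for y :: "'a \<Rightarrow> real"
    have "\<exists>i\<in>I. shift y i \<le> 0" if "y \<in> S" for y
    proof -
      have "Min (y ` I) \<in> y ` I" using insert.hyps by simp
      then obtain i where "i \<in> I" "y i = Min (y ` I)" by auto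
      then show ?thesis using c \<open>y \<in> S\<close> unfolding shift_def by force
    qed
    moreover have "fun_convex (shift ` S)"
      unfolding shift_def by (rule fun_convex_image_shift[OF insert.prems(1)])
    ultimately obtain b where b: "\<forall>i\<in>I. 0 \<le> b i" "sum b I = 1"
      and b_nonpos: "\<forall>y\<in>S. (\<Sum>i\<in>I. b i * shift y i) \<le> 0"
      using insert.IH[of "shift ` S"] by blast
    define a where "a i = (if i = k then c else b i) / (1 + c)" for i
    have sum_a: "(\<Sum>i\<in>insert k I. a i * g i) = (c * g k + (\<Sum>i\<in>I. b i * g i)) / (1 + c)" for g
    proof -
      have "(\<Sum>i\<in>I. a i * g i) = (\<Sum>i\<in>I. b i * g i) / (1 + c)"
        unfolding sum_divide_distrib using insert.hyps(3) by (intro sum.cong) (auto simp: a_def)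
      then show ?thesis using insert.hyps by (simp add: a_def add_divide_distrib)
    qed
    show ?thesis
    proof (intro exI[of _ a] conjI ballI)
      show "0 \<le> a i" if "i \<in> insert k I" for i
        using that b(1) \<open>c \<ge> 0\<close> unfolding a_def by auto
      show "sum a (insert k I) = 1"
        using sum_a[of "\<lambda>_. 1"] b(2) \<open>c \<ge> 0\<close> by simp
      show "(\<Sum>i\<in>insert k I. a i * y i) \<le> 0" if "y \<in> S" for y
      proof -
        have "c * y k + (\<Sum>i\<in>I. b i * y i) = (\<Sum>i\<in>I. b i * shift y i)"
          using b(2) unfolding shift_def by (simp add: distrib_left sum.distrib flip: sum_distrib_right)
        then show ?thesis
          unfolding sum_a using b_nonpos \<open>y \<in> S\<close> \<open>c \<ge> 0\<close> by (simp add: divide_nonpos_pos)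
      qed
    qed
  qed
qed

lemma Min_le_convex_comb_ennreal:
  fixes f :: "'i \<Rightarrow> ennreal"
  assumes "finite I" "I \<noteq> {}" "\<forall>i\<in>I. 0 \<le> a i" "sum a I = 1"
  shows "Min (f ` I) \<le> (\<Sum>i\<in>I. ennreal (a i) * f i)"
proof -
  have "(\<Sum>i\<in>I. ennreal (a i)) = 1" using assms(3,4) by simp
  then have "Min (f ` I) = (\<Sum>i\<in>I. ennreal (a i) * Min (f ` I))"
    by (simp flip: sum_distrib_right)
  also have "\<dots> \<le> (\<Sum>i\<in>I. ennreal (a i) * f i)"
    using assms(1) by (intro sum_mono mult_left_mono) auto
  finally show ?thesis .
qed

lemma enn2real_add: "a \<noteq> top \<Longrightarrow> b \<noteq> top \<Longrightarrow> enn2real (a + b) = enn2real a + enn2real b"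
  by (metis enn2real_ennreal enn2real_nonneg ennreal_enn2real ennreal_plus less_top add_nonneg_nonneg)

definition excess_set :: "('a \<Rightarrow> ennreal) \<Rightarrow> ('i \<Rightarrow> 'a \<Rightarrow> ennreal) \<Rightarrow> 'i set \<Rightarrow> ('i \<Rightarrow> real) set" where
  "excess_set \<phi> \<psi> I =
     {y. \<exists>x. \<phi> x \<noteq> top \<and> (\<forall>i\<in>I. \<psi> i x = top \<or> y i \<le> enn2real (\<psi> i x) - enn2real (\<phi> x))}"

lemma excess_set_nonpos_coord:
  assumes "finite I" "I \<noteq> {}" "\<And>x. Min ((\<lambda>i. \<psi> i x) ` I) \<le> \<phi> x"
  shows "\<forall>y\<in>excess_set \<phi> \<psi> I. \<exists>i\<in>I. y i \<le> 0"
proof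
  fix y assume "y \<in> excess_set \<phi> \<psi> I"
  then obtain x where "\<phi> x \<noteq> top"
    and y: "\<forall>i\<in>I. \<psi> i x = top \<or> y i \<le> enn2real (\<psi> i x) - enn2real (\<phi> x)"
    unfolding excess_set_def by blast
  have "Min ((\<lambda>i. \<psi> i x) ` I) \<in> (\<lambda>i. \<psi> i x) ` I" using assms(1,2) by simp
  then obtain i where "i \<in> I" and "\<psi> i x \<le> \<phi> x" using assms(3)[of x] by auto
  then have "\<psi> i x \<noteq> top" "enn2real (\<psi> i x) \<le> enn2real (\<phi> x)"
    using \<open>\<phi> x \<noteq> top\<close> by (auto simp: top_unique less_top intro: enn2real_mono)
  then show "\<exists>i\<in>I. y i \<le> 0" using y \<open>i \<in> I\<close> by force
qed

lemma scaled_excess_le: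
  assumes "0 \<le> t" "ennreal t * v \<noteq> top" "v = top \<or> y \<le> enn2real v - F"
  shows "t * y \<le> t * (enn2real v - F)"
proof (cases "t = 0")
  case False
  then have "v \<noteq> top" using assms(1,2) by (auto simp: ennreal_mult_eq_top_iff)
  then show ?thesis using assms(1,3) by (simp add: mult_left_mono)
qed simp

lemma fun_convex_excess_set:
  fixes \<phi> :: "'a \<Rightarrow> ennreal" and \<psi> :: "'i \<Rightarrow> 'a \<Rightarrow> ennreal"
  assumes \<phi>: "sublinear_functional add sm \<phi>"
    and \<psi>: "\<And>i. i \<in> I \<Longrightarrow> linear_functional add sm (\<psi> i)"
  shows "fun_convex (excess_set \<phi> \<psi> I)"
  unfolding fun_convex_def
proof (intro ballI allI impI)
  fix y y' and t :: real
  assume "y \<in> excess_set \<phi> \<psi> I" "y' \<in> excess_set \<phi> \<psi> I" and "0 \<le> t \<and> t \<le> 1"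
  then have t: "0 \<le> t" "0 \<le> 1 - t" by auto
  obtain x where "\<phi> x \<noteq> top" and y: "\<forall>i\<in>I. \<psi> i x = top \<or> y i \<le> enn2real (\<psi> i x) - enn2real (\<phi> x)"
    using \<open>y \<in> _\<close> unfolding excess_set_def by blast
  obtain x' where "\<phi> x' \<noteq> top" and y': "\<forall>i\<in>I. \<psi> i x' = top \<or> y' i \<le> enn2real (\<psi> i x') - enn2real (\<phi> x')"
    using \<open>y' \<in> _\<close> unfolding excess_set_def by blast
  define x'' where "x'' = add (sm t x) (sm (1 - t) x')"
  have "\<phi> x'' \<le> ennreal t * \<phi> x + ennreal (1 - t) * \<phi> x'"
    using \<phi> t unfolding x''_def sublinear_functional_def homogeneous_def subadditive_def by metis
  also have "\<dots> = ennreal (t * enn2real (\<phi> x) + (1 - t) * enn2real (\<phi> x'))"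
    using t \<open>\<phi> x \<noteq> top\<close> \<open>\<phi> x' \<noteq> top\<close> by (simp add: ennreal_mult less_top)
  finally have "\<phi> x'' \<noteq> top" and \<phi>x'': "enn2real (\<phi> x'') \<le> t * enn2real (\<phi> x) + (1 - t) * enn2real (\<phi> x')"
    using t by (auto simp: top_unique intro: enn2real_leI)
  have "\<psi> i x'' = top \<or> t * y i + (1 - t) * y' i \<le> enn2real (\<psi> i x'') - enn2real (\<phi> x'')"
    if "i \<in> I" for i
  proof (cases "\<psi> i x'' = top")
    case False
    moreover have \<psi>x'': "\<psi> i x'' = ennreal t * \<psi> i x + ennreal (1 - t) * \<psi> i x'"
      using \<psi>[OF \<open>i \<in> I\<close>] t unfolding x''_def linear_functional_def homogeneous_def additive_def by metis
    ultimately have fin: "ennreal t * \<psi> i x \<noteq> top" "ennreal (1 - t) * \<psi> i x' \<noteq> top" by auto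
    have "enn2real (\<psi> i x'') = t * enn2real (\<psi> i x) + (1 - t) * enn2real (\<psi> i x')"
      unfolding \<psi>x'' enn2real_add[OF fin] enn2real_mult using t by simp
    moreover have "t * y i \<le> t * (enn2real (\<psi> i x) - enn2real (\<phi> x))"
      using scaled_excess_le[OF t(1) fin(1)] y \<open>i \<in> I\<close> by blast
    moreover have "(1 - t) * y' i \<le> (1 - t) * (enn2real (\<psi> i x') - enn2real (\<phi> x'))"
      using scaled_excess_le[OF t(2) fin(2)] y' \<open>i \<in> I\<close> by blast
    ultimately have "t * y i + (1 - t) * y' i \<le> enn2real (\<psi> i x'') - enn2real (\<phi> x'')"
      using \<phi>x'' by (simp add: algebra_simps)
    then show ?thesis ..
  qed simp
  then show "(\<lambda>i. t * y i + (1 - t) * y' i) \<in> excess_set \<phi> \<psi> I"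
    unfolding excess_set_def using \<open>\<phi> x'' \<noteq> top\<close> by blast
qed

lemma convex_comb_le_if_excess_set_weights:
  fixes \<phi> :: "'a \<Rightarrow> ennreal" and \<psi> :: "'i \<Rightarrow> 'a \<Rightarrow> ennreal"
  assumes "finite I" and a: "\<forall>i\<in>I. 0 \<le> a i" "sum a I = 1"
    and a_nonpos: "\<forall>y\<in>excess_set \<phi> \<psi> I. (\<Sum>i\<in>I. a i * y i) \<le> 0"
  shows "(\<Sum>i\<in>I. ennreal (a i) * \<psi> i x) \<le> \<phi> x"
proof (cases "\<phi> x = top")
  case False
  define F where "F = enn2real (\<phi> x)"
  have excess: "y \<in> excess_set \<phi> \<psi> I"
    if "\<forall>i\<in>I. \<psi> i x = top \<or> y i \<le> enn2real (\<psi> i x) - F" for y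
    using that False unfolding excess_set_def F_def by blast
  have finite_\<psi>: "\<psi> j x \<noteq> top" if "j \<in> I" "a j > 0" for j
  proof
    assume "\<psi> j x = top"
    define y where "y k = - F + (if k = j then (F + 1) / a j else 0)" for k
    have "y \<in> excess_set \<phi> \<psi> I"
      using \<open>\<psi> j x = top\<close> by (intro excess) (auto simp: y_def)
    have "a i * y i = a i * - F + (if i = j then F + 1 else 0)" for i
      using \<open>a j > 0\<close> by (simp add: y_def field_simps)
    then have "(\<Sum>i\<in>I. a i * y i) = 1"
      using \<open>j \<in> I\<close> a(2) \<open>finite I\<close> by (simp add: sum_subtractf flip: sum_distrib_right)
    with \<open>y \<in> excess_set \<phi> \<psi> I\<close> show False using a_nonpos by fastforce
  qed
  have "(\<lambda>i. enn2real (\<psi> i x) - F) \<in> excess_set \<phi> \<psi> I" by (intro excess) auto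
  then have "(\<Sum>i\<in>I. a i * (enn2real (\<psi> i x) - F)) \<le> 0" using a_nonpos by fastforce
  then have le_F: "(\<Sum>i\<in>I. a i * enn2real (\<psi> i x)) \<le> F"
    using a(2) by (simp add: right_diff_distrib sum_subtractf flip: sum_distrib_right)
  have "(\<Sum>i\<in>I. ennreal (a i) * \<psi> i x) = (\<Sum>i\<in>I. ennreal (a i * enn2real (\<psi> i x)))"
  proof (intro sum.cong refl)
    fix i assume "i \<in> I"
    then consider "a i = 0" | "a i > 0" "\<psi> i x \<noteq> top" using a(1) finite_\<psi> by force
    then show "ennreal (a i) * \<psi> i x = ennreal (a i * enn2real (\<psi> i x))"
      by cases (auto simp: ennreal_mult less_top)
  qed
  also have "\<dots> = ennreal (\<Sum>i\<in>I. a i * enn2real (\<psi> i x))" using a(1) by simp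
  also have "\<dots> \<le> ennreal F" using le_F by (rule ennreal_leI)
  also have "\<dots> = \<phi> x" using False unfolding F_def by (simp add: less_top)
  finally show ?thesis .
qed simp

theorem proposition2p8:
  fixes add :: "'a \<Rightarrow> 'a \<Rightarrow> 'a" and z :: 'a and sm :: "real \<Rightarrow> 'a \<Rightarrow> 'a"
    and \<phi> :: "'a \<Rightarrow> ennreal" and \<psi> :: "nat \<Rightarrow> 'a \<Rightarrow> ennreal" and n :: nat
  assumes "cone add z sm"
    and "sublinear_functional add sm \<phi>"
    and "n \<ge> 1"
    and "\<And>i. i \<in> {1..n} \<Longrightarrow> linear_functional add sm (\<psi> i)"
    and "\<And>x. Min ((\<lambda>i. \<psi> i x) ` {1..n}) \<le> \<phi> x"
  shows "\<exists>a :: nat \<Rightarrow> real. (\<forall>i\<in>{1..n}. a i \<ge> 0) \<and> (\<Sum>i=1..n. a i) = 1 \<and>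
           (\<forall>x. Min ((\<lambda>i. \<psi> i x) ` {1..n}) \<le> (\<Sum>i=1..n. ennreal (a i) * \<psi> i x) \<and>
                (\<Sum>i=1..n. ennreal (a i) * \<psi> i x) \<le> \<phi> x)"
proof -
  have I: "finite {1..n}" "{1..n} \<noteq> {}" using assms(3) by auto
  obtain a where a: "\<forall>i\<in>{1..n}. 0 \<le> a i" "sum a {1..n} = 1"
    and a_nonpos: "\<forall>y\<in>excess_set \<phi> \<psi> {1..n}. (\<Sum>i=1..n. a i * y i) \<le> 0"
    using fun_convex_nonpos_coord_imp_weights[OF I fun_convex_excess_set[OF assms(2,4)]
        excess_set_nonpos_coord[OF I assms(5)]] by blast
  show ?thesis
    using a Min_le_convex_comb_ennreal[OF I a]
      convex_comb_le_if_excess_set_weights[OF I(1) a a_nonpos] by blast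
qed

end
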